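(* Let $X$ be a finite connected poset and $\theta\in\mathcal{M}(X)$. Then $\theta\in\mathcal{AM}(X)$ if and only if $s^+_{\theta,\Gamma}(z)-s^-_{\theta,\Gamma}(z)=t^+_{\theta,\Gamma}(z)-t^-_{\theta,\Gamma}(z)$ holds for every $z\in X$ and every closed semiwalk $\Gamma:u_0,\dots,u_m=u_0$ with $m\ge2$.
   Context: For $x<y$, $e_{xy}$ denotes the incidence-algebra basis element and $B=\{e_{xy}:x<y\}$. For a bijection $\theta:B\to B$ and a maximal chain $C:u_1<\dots<u_k$, $\theta$ is increasing on $C$ if there is a maximal chain $D:v_1<\dots<v_k$ with $\theta(e_{u_iu_j})=e_{v_iv_j}$ for all $i<j$, decreasing if $\theta(e_{u_iu_j})=e_{v_{k-j+1}v_{k-i+1}}$ for all $i<j$. $\mathcal{M}(X)$ is the set of bijections $B\to B$ increasing or decreasing on every maximal chain. A semiwalk is a sequence $u_0,\dots,u_m$ with $u_i<u_{i+1}$ or $u_i>u_{i+1}$ for each $i$; a walk is a semiwalk in which moreover one of $u_i,u_{i+1}$ covers the other for each $i$; (semi)walks are closed if $u_0=u_m$. For a closed semiwalk $\Gamma:u_0,\dots,u_m=u_0$ and $z\in X$: $s^+_{\theta,\Gamma}(z)=|\{i: u_i<u_{i+1},\ \exists w>z,\ \theta(e_{zw})=e_{u_iu_{i+1}}\}|$, $s^-_{\theta,\Gamma}(z)=|\{i: u_i>u_{i+1},\ \exists w>z,\ \theta(e_{zw})=e_{u_{i+1}u_i}\}|$, $t^+_{\theta,\Gamma}(z)=|\{i: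 u_i<u_{i+1},\ \exists w<z,\ \theta(e_{wz})=e_{u_iu_{i+1}}\}|$, $t^-_{\theta,\Gamma}(z)=|\{i: u_i>u_{i+1},\ \exists w<z,\ \theta(e_{wz})=e_{u_{i+1}u_i}\}|$, $0\le i\le m-1$. $\theta$ is admissible if $s^+-s^-=t^+-t^-$ at every $z$ for every closed walk; $\mathcal{AM}(X)$ is the set of admissible elements of $\mathcal{M}(X)$. *)

theory Defs
  imports Main
begin

text \<open>A poset is modelled as a carrier set X of a type with a partial order
  (the order on X is the restriction of the type's order).  The basis element
  e_xy (x<y) is represented by the pair (x,y); B is the set of such pairs.\<close>

definition basisB :: "'a::order set \<Rightarrow> ('a \<times> 'a) set" where
  "basisB X = {(x, y). x \<in> X \<and> y \<in> X \<and> x < y}"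

definition is_chain_in :: "'a::order set \<Rightarrow> 'a set \<Rightarrow> bool" where
  "is_chain_in X C \<longleftrightarrow> C \<subseteq> X \<and> (\<forall>x\<in>C. \<forall>y\<in>C. x \<le> y \<or> y \<le> x)"

definition max_chain :: "'a::order set \<Rightarrow> 'a list \<Rightarrow> bool" where
  "max_chain X us \<longleftrightarrow> sorted_wrt (<) us \<and> is_chain_in X (set us) \<and>
     (\<forall>C. is_chain_in X C \<and> set us \<subseteq> C \<longrightarrow> C = set us)"

definition increasing_on :: "'a::order set \<Rightarrow> ('a \<times> 'a \<Rightarrow> 'a \<times> 'a) \<Rightarrow> 'a list \<Rightarrow> bool" where
  "increasing_on X \<theta> us \<longleftrightarrow> (\<exists>vs. max_chain X vs \<and> length vs = length us \<and>
     (\<forall>i j. i < j \<and> j < length us \<longrightarrow> \<theta> (us ! i, us ! j) = (vs ! i, vs ! j)))"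

definition decreasing_on :: "'a::order set \<Rightarrow> ('a \<times> 'a \<Rightarrow> 'a \<times> 'a) \<Rightarrow> 'a list \<Rightarrow> bool" where
  "decreasing_on X \<theta> us \<longleftrightarrow> (\<exists>vs. max_chain X vs \<and> length vs = length us \<and>
     (\<forall>i j. i < j \<and> j < length us \<longrightarrow>
        \<theta> (us ! i, us ! j) = (vs ! (length us - 1 - j), vs ! (length us - 1 - i))))"

definition M_set :: "'a::order set \<Rightarrow> ('a \<times> 'a \<Rightarrow> 'a \<times> 'a) set" where
  "M_set X = {\<theta>. bij_betw \<theta> (basisB X) (basisB X) \<and>
     (\<forall>us. max_chain X us \<longrightarrow> increasing_on X \<theta> us \<or> decreasing_on X \<theta> us)}"

definition covers :: "'a::order set \<Rightarrow> 'a \<Rightarrow> 'a \<Rightarrow> bool" where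
  "covers X x y \<longleftrightarrow> x \<in> X \<and> y \<in> X \<and> x < y \<and> \<not> (\<exists>z\<in>X. x < z \<and> z < y)"

text \<open>A semiwalk u_0,...,u_m is a nonempty list of elements of X (length m+1).\<close>
definition semiwalk :: "'a::order set \<Rightarrow> 'a list \<Rightarrow> bool" where
  "semiwalk X us \<longleftrightarrow> us \<noteq> [] \<and> set us \<subseteq> X \<and>
     (\<forall>i. Suc i < length us \<longrightarrow> us ! i < us ! Suc i \<or> us ! i > us ! Suc i)"

definition walk :: "'a::order set \<Rightarrow> 'a list \<Rightarrow> bool" where
  "walk X us \<longleftrightarrow> semiwalk X us \<and>
     (\<forall>i. Suc i < length us \<longrightarrow> covers X (us ! i) (us ! Suc i) \<or> covers X (us ! Suc i) (us ! i))"

definition closed_sw :: "'a list \<Rightarrow> bool" where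
  "closed_sw us \<longleftrightarrow> hd us = last us"

definition connected_poset :: "'a::order set \<Rightarrow> bool" where
  "connected_poset X \<longleftrightarrow> (\<forall>x\<in>X. \<forall>y\<in>X. \<exists>us. semiwalk X us \<and> hd us = x \<and> last us = y)"

definition s_plus :: "'a::order set \<Rightarrow> ('a \<times> 'a \<Rightarrow> 'a \<times> 'a) \<Rightarrow> 'a list \<Rightarrow> 'a \<Rightarrow> nat" where
  "s_plus X \<theta> us z = card {i. Suc i < length us \<and> us ! i < us ! Suc i \<and>
      (\<exists>w\<in>X. w > z \<and> \<theta> (z, w) = (us ! i, us ! Suc i))}"

definition s_minus :: "'a::order set \<Rightarrow> ('a \<times> 'a \<Rightarrow> 'a \<times> 'a) \<Rightarrow> 'a list \<Rightarrow> 'a \<Rightarrow> nat" where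
  "s_minus X \<theta> us z = card {i. Suc i < length us \<and> us ! i > us ! Suc i \<and>
      (\<exists>w\<in>X. w > z \<and> \<theta> (z, w) = (us ! Suc i, us ! i))}"

definition t_plus :: "'a::order set \<Rightarrow> ('a \<times> 'a \<Rightarrow> 'a \<times> 'a) \<Rightarrow> 'a list \<Rightarrow> 'a \<Rightarrow> nat" where
  "t_plus X \<theta> us z = card {i. Suc i < length us \<and> us ! i < us ! Suc i \<and>
      (\<exists>w\<in>X. w < z \<and> \<theta> (w, z) = (us ! i, us ! Suc i))}"

definition t_minus :: "'a::order set \<Rightarrow> ('a \<times> 'a \<Rightarrow> 'a \<times> 'a) \<Rightarrow> 'a list \<Rightarrow> 'a \<Rightarrow> nat" where
  "t_minus X \<theta> us z = card {i. Suc i < length us \<and> us ! i > us ! Suc i \<and>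
      (\<exists>w\<in>X. w < z \<and> \<theta> (w, z) = (us ! Suc i, us ! i))}"

definition balanced_at :: "'a::order set \<Rightarrow> ('a \<times> 'a \<Rightarrow> 'a \<times> 'a) \<Rightarrow> 'a list \<Rightarrow> 'a \<Rightarrow> bool" where
  "balanced_at X \<theta> us z \<longleftrightarrow>
     int (s_plus X \<theta> us z) - int (s_minus X \<theta> us z) = int (t_plus X \<theta> us z) - int (t_minus X \<theta> us z)"

definition admissible :: "'a::order set \<Rightarrow> ('a \<times> 'a \<Rightarrow> 'a \<times> 'a) \<Rightarrow> bool" where
  "admissible X \<theta> \<longleftrightarrow> (\<forall>us. walk X us \<and> closed_sw us \<longrightarrow> (\<forall>z\<in>X. balanced_at X \<theta> us z))"

definition AM_set :: "'a::order set \<Rightarrow> ('a \<times> 'a \<Rightarrow> 'a \<times> 'a) set" where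
  "AM_set X = {\<theta> \<in> M_set X. admissible X \<theta>}"

end

theory Submission
  imports Defs
begin

text \<open>The defect s_plus - s_minus - t_plus + t_minus at z along a semiwalk is a sum over its steps of a
  charge that depends only on the step: a step between a < b carries
  [\<theta>\<inverse>(a,b) starts at z] - [\<theta>\<inverse>(a,b) ends at z], with sign according to its direction.
  A maximal chain D through a < b is the image under \<theta> of a maximal chain C, increasingly or
  decreasingly, because \<theta> induces an injection, hence a bijection, of the finite set of maximal
  chains. Pulling back along C shows that the charge telescopes on D, so the step from a to b may
  be replaced by the covering walk along D without changing the total charge. Thus every closed
  semiwalk has the charge of a closed walk; conversely, a closed walk has length 1 or at least 3.\<close>

lemma semiwalk_singleton [simp]: "semiwalk X [a] \<longleftrightarrow> a \<in> X"
  by (simp add: semiwalk_def)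

lemma semiwalk_Cons_Cons:
  "semiwalk X (a # b # us) \<longleftrightarrow> a \<in> X \<and> (a < b \<or> b < a) \<and> semiwalk X (b # us)"
  by (auto simp: semiwalk_def less_Suc_eq_0_disj)

lemma walk_singleton [simp]: "walk X [a] \<longleftrightarrow> a \<in> X"
  by (simp add: walk_def)

lemma walk_Cons_Cons:
  "walk X (a # b # us) \<longleftrightarrow> a \<in> X \<and> (covers X a b \<or> covers X b a) \<and> walk X (b # us)"
  by (auto simp: walk_def semiwalk_Cons_Cons less_Suc_eq_0_disj covers_def)

lemma walk_nonempty: "walk X us \<Longrightarrow> us \<noteq> []"
  by (simp add: walk_def semiwalk_def)

lemma walk_if_covers:
  assumes "us \<noteq> []" and "set us \<subseteq> X"
    and "\<And>i. Suc i < length us \<Longrightarrow> covers X (us ! i) (us ! Suc i) \<or> covers X (us ! Suc i) (us ! i)"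
  shows "walk X us"
  using assms by (auto simp: walk_def semiwalk_def covers_def)

lemma walk_append: "walk X xs \<Longrightarrow> walk X ys \<Longrightarrow> last xs = hd ys \<Longrightarrow> walk X (xs @ tl ys)"
proof (induction xs rule: induct_list012)
  case (2 a)
  then show ?case by (cases ys) auto
next
  case (3 a b us)
  then show ?case by (simp add: walk_Cons_Cons)
qed (simp add: walk_def semiwalk_def)

lemma walk_rev: "walk X us \<Longrightarrow> walk X (rev us)"
proof (induction us rule: induct_list012)
  case (3 a b us)
  then have "walk X (rev (b # us) @ tl [b, a])"
    by (intro walk_append) (auto simp: walk_Cons_Cons covers_def)
  then show ?case by simp
qed (simp_all add: walk_def semiwalk_def)

lemma walk_drop_take:
  assumes "walk X us" and "p \<le> q" and "q < length us"
  shows "walk X (drop p (take (Suc q) us))" (is "walk X ?ws")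
proof (rule walk_if_covers)
  have len: "length ?ws = Suc q - p" and nth: "\<And>i. i < length ?ws \<Longrightarrow> ?ws ! i = us ! (p + i)"
    using assms(2,3) by simp_all
  then show "?ws \<noteq> []" using assms(2) by auto
  have "set ?ws \<subseteq> set us" by (rule subset_trans[OF set_drop_subset set_take_subset])
  then show "set ?ws \<subseteq> X" using assms(1) by (auto simp: walk_def semiwalk_def)
  fix i assume i: "Suc i < length ?ws"
  then have "Suc (p + i) < length us" using len assms(3) by linarith
  then have "covers X (us ! (p + i)) (us ! Suc (p + i)) \<or> covers X (us ! Suc (p + i)) (us ! (p + i))"
    using assms(1) unfolding walk_def by blast
  then show "covers X (?ws ! i) (?ws ! Suc i) \<or> covers X (?ws ! Suc i) (?ws ! i)"
    using nth[of i] nth[of "Suc i"] i by simp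
qed

lemma last_append_tl: "ys \<noteq> [] \<Longrightarrow> last xs = hd ys \<Longrightarrow> xs \<noteq> [] \<Longrightarrow> last (xs @ tl ys) = last ys"
  by (cases ys; cases "tl ys") auto

lemma closed_semiwalk_length:
  assumes "semiwalk X us" and "closed_sw us"
  shows "length us = 1 \<or> 3 \<le> length us"
proof -
  have "length us \<noteq> 0" using assms(1) by (simp add: semiwalk_def)
  moreover have "length us \<noteq> 2"
  proof
    assume "length us = 2"
    then obtain a b where "us = [a, b]" by (auto simp: numeral_2_eq_2 length_Suc_conv)
    with assms show False by (auto simp: closed_sw_def semiwalk_Cons_Cons)
  qed
  ultimately show ?thesis by linarith
qed

lemma card_adjacent_Cons_Cons:
  "card {i. Suc i < length (a # b # us) \<and> R ((a # b # us) ! i) ((a # b # us) ! Suc i)}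
   = of_bool (R a b) + card {i. Suc i < length (b # us) \<and> R ((b # us) ! i) ((b # us) ! Suc i)}"
proof -
  let ?S = "{i. Suc i < length (b # us) \<and> R ((b # us) ! i) ((b # us) ! Suc i)}"
  have "{i. Suc i < length (a # b # us) \<and> R ((a # b # us) ! i) ((a # b # us) ! Suc i)}
     = (if R a b then insert 0 (Suc ` ?S) else Suc ` ?S)"
    by (auto simp: less_Suc_eq_0_disj)
  moreover have "finite ?S" by (rule finite_subset[of _ "{..<length (b # us)}"]) auto
  ultimately show ?thesis by (simp add: card_image)
qed

lemma s_plus_Cons_Cons:
  "s_plus X \<theta> (a # b # us) z
   = of_bool (a < b \<and> (\<exists>w\<in>X. w > z \<and> \<theta> (z, w) = (a, b))) + s_plus X \<theta> (b # us) z"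
  unfolding s_plus_def
  by (rule card_adjacent_Cons_Cons[where R = "\<lambda>a b. a < b \<and> (\<exists>w\<in>X. w > z \<and> \<theta> (z, w) = (a, b))"])

lemma s_minus_Cons_Cons:
  "s_minus X \<theta> (a # b # us) z
   = of_bool (b < a \<and> (\<exists>w\<in>X. w > z \<and> \<theta> (z, w) = (b, a))) + s_minus X \<theta> (b # us) z"
  unfolding s_minus_def
  by (rule card_adjacent_Cons_Cons[where R = "\<lambda>a b. b < a \<and> (\<exists>w\<in>X. w > z \<and> \<theta> (z, w) = (b, a))"])

lemma t_plus_Cons_Cons:
  "t_plus X \<theta> (a # b # us) z
   = of_bool (a < b \<and> (\<exists>w\<in>X. w < z \<and> \<theta> (w, z) = (a, b))) + t_plus X \<theta> (b # us) z"
  unfolding t_plus_def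
  by (rule card_adjacent_Cons_Cons[where R = "\<lambda>a b. a < b \<and> (\<exists>w\<in>X. w < z \<and> \<theta> (w, z) = (a, b))"])

lemma t_minus_Cons_Cons:
  "t_minus X \<theta> (a # b # us) z
   = of_bool (b < a \<and> (\<exists>w\<in>X. w < z \<and> \<theta> (w, z) = (b, a))) + t_minus X \<theta> (b # us) z"
  unfolding t_minus_def
  by (rule card_adjacent_Cons_Cons[where R = "\<lambda>a b. b < a \<and> (\<exists>w\<in>X. w < z \<and> \<theta> (w, z) = (b, a))"])

definition pair_charge :: "'a::order set \<Rightarrow> ('a \<times> 'a \<Rightarrow> 'a \<times> 'a) \<Rightarrow> 'a \<Rightarrow> 'a \<Rightarrow> 'a \<Rightarrow> int" where
  "pair_charge X \<theta> z a b =
     of_bool (\<exists>w\<in>X. z < w \<and> \<theta> (z, w) = (a, b)) - of_bool (\<exists>w\<in>X. w < z \<and> \<theta> (w, z) = (a, b))"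

definition step_charge :: "'a::order set \<Rightarrow> ('a \<times> 'a \<Rightarrow> 'a \<times> 'a) \<Rightarrow> 'a \<Rightarrow> 'a \<Rightarrow> 'a \<Rightarrow> int" where
  "step_charge X \<theta> z a b =
     (if a < b then pair_charge X \<theta> z a b else if b < a then - pair_charge X \<theta> z b a else 0)"

fun charge :: "'a::order set \<Rightarrow> ('a \<times> 'a \<Rightarrow> 'a \<times> 'a) \<Rightarrow> 'a \<Rightarrow> 'a list \<Rightarrow> int" where
  "charge X \<theta> z (a # b # us) = step_charge X \<theta> z a b + charge X \<theta> z (b # us)"
| "charge X \<theta> z _ = 0"

lemma balanced_at_iff_charge_eq_0: "balanced_at X \<theta> us z \<longleftrightarrow> charge X \<theta> z us = 0"
proof -
  have "int (s_plus X \<theta> us z) - int (s_minus X \<theta> us z) - int (t_plus X \<theta> us z) + int (t_minus X \<theta> us z)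
     = charge X \<theta> z us"
  proof (induction X \<theta> z us rule: charge.induct)
    case (1 X \<theta> z a b us)
    have "of_bool (a < b \<and> (\<exists>w\<in>X. w > z \<and> \<theta> (z, w) = (a, b)))
        - of_bool (b < a \<and> (\<exists>w\<in>X. w > z \<and> \<theta> (z, w) = (b, a)))
        - of_bool (a < b \<and> (\<exists>w\<in>X. w < z \<and> \<theta> (w, z) = (a, b)))
        + of_bool (b < a \<and> (\<exists>w\<in>X. w < z \<and> \<theta> (w, z) = (b, a))) = step_charge X \<theta> z a b"
      by (cases "a < b"; cases "b < a") (simp_all add: step_charge_def pair_charge_def)
    with 1 show ?case
      by (simp add: s_plus_Cons_Cons s_minus_Cons_Cons t_plus_Cons_Cons t_minus_Cons_Cons)
  qed (simp_all add: s_plus_def s_minus_def t_plus_def t_minus_def)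
  then show ?thesis unfolding balanced_at_def by linarith
qed

lemma step_charge_swap: "step_charge X \<theta> z b a = - step_charge X \<theta> z a b"
  by (auto simp: step_charge_def dest: less_asym)

lemma charge_append:
  "xs \<noteq> [] \<Longrightarrow> ys \<noteq> [] \<Longrightarrow> last xs = hd ys \<Longrightarrow>
   charge X \<theta> z (xs @ tl ys) = charge X \<theta> z xs + charge X \<theta> z ys"
  by (induction X \<theta> z xs rule: charge.induct) (auto simp: neq_Nil_conv)

lemma charge_rev: "charge X \<theta> z (rev us) = - charge X \<theta> z us"
proof (induction X \<theta> z us rule: charge.induct)
  case (1 X \<theta> z a b us)
  have "charge X \<theta> z (rev (b # us) @ tl [b, a]) = charge X \<theta> z (rev (b # us)) + charge X \<theta> z [b, a]"
    by (rule charge_append) auto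
  then show ?case using 1 step_charge_swap[of X \<theta> z a b] by simp
qed auto

lemma charge_telescope:
  "us \<noteq> [] \<Longrightarrow> (\<And>i. Suc i < length us \<Longrightarrow> step_charge X \<theta> z (us ! i) (us ! Suc i) = h i - h (Suc i))
   \<Longrightarrow> charge X \<theta> z us = h 0 - h (length us - 1)"
proof (induction X \<theta> z us arbitrary: h rule: charge.induct)
  case (1 X \<theta> z a b us)
  have "charge X \<theta> z (b # us) = h 1 - h (length us + 1)"
    using "1.IH"[of "h \<circ> Suc"] "1.prems"(2) by fastforce
  then show ?case using "1.prems"(2)[of 0] by simp
qed auto

lemma sorted_wrt_less_distinct: "sorted_wrt (<) (xs :: 'a::order list) \<Longrightarrow> distinct xs"
  by (induction xs) auto

lemma sorted_wrt_less_nth_le: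
  "sorted_wrt (<) (xs :: 'a::order list) \<Longrightarrow> i \<le> j \<Longrightarrow> j < length xs \<Longrightarrow> xs ! i \<le> xs ! j"
  using sorted_wrt_nth_less[of "(<)" xs i j] by (cases "i = j") auto

lemma sorted_wrt_less_nth_less_iff:
  "sorted_wrt (<) (xs :: 'a::order list) \<Longrightarrow> i < length xs \<Longrightarrow> j < length xs \<Longrightarrow>
   xs ! i < xs ! j \<longleftrightarrow> i < j"
  by (metis leI less_le_not_le sorted_wrt_less_nth_le sorted_wrt_nth_less)

lemma sorted_wrt_less_unique:
  fixes xs ys :: "'a::order list"
  shows "sorted_wrt (<) xs \<Longrightarrow> sorted_wrt (<) ys \<Longrightarrow> set xs = set ys \<Longrightarrow> xs = ys"
proof (induction xs arbitrary: ys)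
  case (Cons x xs)
  then obtain y ys' where ys: "ys = y # ys'" by (cases ys) auto
  have "x = y"
    using Cons.prems ys by (metis insert_iff less_asym list.simps(15) sorted_wrt.simps(2))
  moreover have "y \<notin> set xs" "y \<notin> set ys'" using Cons.prems ys \<open>x = y\<close> by auto
  ultimately have "set xs = set ys'" using Cons.prems(3) ys by (simp add: insert_ident)
  with Cons ys \<open>x = y\<close> show ?case by simp
qed simp

lemma finite_chain_sorted_list:
  fixes S :: "'a::order set"
  shows "finite S \<Longrightarrow> \<forall>x\<in>S. \<forall>y\<in>S. x \<le> y \<or> y \<le> x \<Longrightarrow> \<exists>xs. sorted_wrt (<) xs \<and> set xs = S"
proof (induction S rule: remove_induct)
  case (remove S)
  obtain m where m: "m \<in> S" "\<forall>y\<in>S. y \<le> m \<longrightarrow> y = m"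
    using finite_has_minimal[OF remove(1,2)] by blast
  with remove.prems have least: "\<forall>y\<in>S. m \<le> y" by blast
  obtain xs where "sorted_wrt (<) xs" "set xs = S - {m}"
    using remove.IH[OF m(1)] remove.prems by blast
  with m(1) least have "sorted_wrt (<) (m # xs) \<and> set (m # xs) = S"
    by (auto simp: order.strict_iff_order)
  then show ?case by blast
qed auto

lemma chain_extends_to_max_chain:
  fixes X :: "'a::order set"
  assumes "finite X" and "is_chain_in X C"
  shows "\<exists>D. max_chain X D \<and> C \<subseteq> set D"
proof -
  let ?A = "{C'. is_chain_in X C' \<and> C \<subseteq> C'}"
  have "finite ?A"
    by (rule finite_subset[of _ "Pow X"]) (auto simp: is_chain_in_def assms(1))
  moreover have "C \<in> ?A" using assms(2) by simp
  ultimately have "\<exists>M\<in>?A. C \<subseteq> M \<and> (\<forall>C'\<in>?A. M \<subseteq> C' \<longrightarrow> M = C')"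
    by (rule finite_has_maximal2)
  then obtain M where M: "M \<in> ?A" "\<forall>C'\<in>?A. M \<subseteq> C' \<longrightarrow> M = C'"
    by (elim bexE conjE) (intro that)
  have "finite M" using M(1) assms(1) finite_subset by (auto simp: is_chain_in_def)
  then obtain D where D: "sorted_wrt (<) D" "set D = M"
    using finite_chain_sorted_list[OF \<open>finite M\<close>] M(1) by (auto simp: is_chain_in_def)
  have "C' = set D" if "is_chain_in X C'" "set D \<subseteq> C'" for C'
  proof -
    have "C' \<in> ?A" using M(1) that D(2) by auto
    then show ?thesis using M(2) that(2) D(2) by blast
  qed
  with D M(1) have "max_chain X D" by (simp add: max_chain_def)
  with D(2) M(1) show ?thesis by blast
qed

lemma max_chain_nothing_between:
  assumes mc: "max_chain X D" and i: "Suc i < length D" and w: "D ! i < w" "w < D ! Suc i"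
  shows "w \<notin> X"
proof
  assume "w \<in> X"
  have s: "sorted_wrt (<) D" and ch: "is_chain_in X (set D)"
    and mx: "\<And>C. is_chain_in X C \<Longrightarrow> set D \<subseteq> C \<Longrightarrow> C = set D"
    using mc by (auto simp: max_chain_def)
  have "w \<le> y \<or> y \<le> w" if "y \<in> set D" for y
  proof -
    obtain j where j: "j < length D" "y = D ! j" using \<open>y \<in> set D\<close> by (auto simp: in_set_conv_nth)
    show ?thesis
    proof (cases "j \<le> i")
      case True
      then have "y \<le> D ! i" using sorted_wrt_less_nth_le[OF s] i j by simp
      with w(1) have "y \<le> w" by simp
      then show ?thesis ..
    next
      case False
      then have "D ! Suc i \<le> y" using sorted_wrt_less_nth_le[OF s] j by simp
      with w(2) have "w \<le> y" by simp
      then show ?thesis ..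
    qed
  qed
  with ch \<open>w \<in> X\<close> have "is_chain_in X (insert w (set D))" by (auto simp: is_chain_in_def)
  then have "w \<in> set D" using mx by blast
  then obtain j where j: "j < length D" "w = D ! j" by (auto simp: in_set_conv_nth)
  have "i < j" using sorted_wrt_less_nth_less_iff[OF s, of i j] w(1) i j by simp
  moreover have "j < Suc i" using sorted_wrt_less_nth_less_iff[OF s, of j "Suc i"] w(2) i j by simp
  ultimately show False by simp
qed

lemma max_chain_covers:
  assumes mc: "max_chain X D" and i: "Suc i < length D"
  shows "covers X (D ! i) (D ! Suc i)"
proof -
  have s: "sorted_wrt (<) D" and ch: "is_chain_in X (set D)" using mc by (simp_all add: max_chain_def)
  have "D ! i < D ! Suc i" using sorted_wrt_nth_less[OF s, of i "Suc i"] i by simp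
  moreover have "D ! i \<in> X" "D ! Suc i \<in> X" using ch i by (auto simp: is_chain_in_def)
  ultimately show ?thesis using max_chain_nothing_between[OF mc i] by (auto simp: covers_def)
qed

lemma max_chain_walk:
  assumes "max_chain X D" and "D \<noteq> []"
  shows "walk X D"
proof (rule walk_if_covers)
  show "set D \<subseteq> X" using assms(1) by (simp add: max_chain_def is_chain_in_def)
qed (use assms max_chain_covers in blast)+

definition maps_increasingly :: "('a \<times> 'a \<Rightarrow> 'a \<times> 'a) \<Rightarrow> 'a list \<Rightarrow> 'a list \<Rightarrow> bool" where
  "maps_increasingly \<theta> C D \<longleftrightarrow>
     (\<forall>i j. i < j \<and> j < length C \<longrightarrow> \<theta> (C ! i, C ! j) = (D ! i, D ! j))"

definition maps_decreasingly :: "('a \<times> 'a \<Rightarrow> 'a \<times> 'a) \<Rightarrow> 'a list \<Rightarrow> 'a list \<Rightarrow> bool" where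
  "maps_decreasingly \<theta> C D \<longleftrightarrow>
     (\<forall>i j. i < j \<and> j < length C \<longrightarrow> \<theta> (C ! i, C ! j) = (D ! (length C - 1 - j), D ! (length C - 1 - i)))"

lemma increasing_on_iff:
  "increasing_on X \<theta> C \<longleftrightarrow> (\<exists>D. max_chain X D \<and> length D = length C \<and> maps_increasingly \<theta> C D)"
  by (simp only: increasing_on_def maps_increasingly_def)

lemma decreasing_on_iff:
  "decreasing_on X \<theta> C \<longleftrightarrow> (\<exists>D. max_chain X D \<and> length D = length C \<and> maps_decreasingly \<theta> C D)"
  by (simp only: decreasing_on_def maps_decreasingly_def)

definition chain_pairs :: "'a list \<Rightarrow> ('a \<times> 'a) set" where
  "chain_pairs xs = (\<lambda>(i, j). (xs ! i, xs ! j)) ` {(i, j). i < j \<and> j < length xs}"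

lemma chain_pairsI: "i < j \<Longrightarrow> j < length xs \<Longrightarrow> (xs ! i, xs ! j) \<in> chain_pairs xs"
  unfolding chain_pairs_def by (rule image_eqI[of _ _ "(i, j)"]) auto

lemma chain_pairsE:
  assumes "p \<in> chain_pairs xs"
  obtains i j where "i < j" "j < length xs" "p = (xs ! i, xs ! j)"
  using assms unfolding chain_pairs_def by auto

lemma chain_pairs_subset_basisB:
  assumes "max_chain X C"
  shows "chain_pairs C \<subseteq> basisB X"
proof
  fix p assume "p \<in> chain_pairs C"
  then obtain i j where ij: "i < j" "j < length C" "p = (C ! i, C ! j)" by (rule chain_pairsE)
  moreover have "sorted_wrt (<) C" "set C \<subseteq> X"
    using assms by (simp_all add: max_chain_def is_chain_in_def)
  ultimately show "p \<in> basisB X"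
    using sorted_wrt_nth_less[of "(<)" C i j] nth_mem[of i C] nth_mem[of j C] by (auto simp: basisB_def)
qed

lemma chain_pairs_determine_set:
  assumes "2 \<le> length xs"
  shows "fst ` chain_pairs xs \<union> snd ` chain_pairs xs = set xs"
proof (intro equalityI subsetI)
  fix x assume "x \<in> set xs"
  then obtain i where i: "i < length xs" "x = xs ! i" by (auto simp: in_set_conv_nth)
  show "x \<in> fst ` chain_pairs xs \<union> snd ` chain_pairs xs"
  proof (cases "i = 0")
    case True
    have "(xs ! 0, xs ! 1) \<in> chain_pairs xs" using assms by (intro chain_pairsI) auto
    with True i show ?thesis by force
  next
    case False
    then have "(xs ! 0, xs ! i) \<in> chain_pairs xs" using i by (intro chain_pairsI) auto
    with i show ?thesis by force
  qed
qed (auto elim!: chain_pairsE)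

lemma chain_pairs_inject:
  fixes xs ys :: "'a::order list"
  assumes "sorted_wrt (<) xs" "sorted_wrt (<) ys" "2 \<le> length xs" "2 \<le> length ys"
    and "chain_pairs xs = chain_pairs ys"
  shows "xs = ys"
proof -
  have "set xs = set ys"
    using assms(3-5) chain_pairs_determine_set[of xs] chain_pairs_determine_set[of ys] by simp
  with assms(1,2) show ?thesis by (rule sorted_wrt_less_unique)
qed

lemma maps_decreasingly_reindex:
  assumes "maps_decreasingly \<theta> C D" and "length C = length D" and "i < j" and "j < length D"
  shows "\<theta> (C ! (length D - 1 - j), C ! (length D - 1 - i)) = (D ! i, D ! j)"
proof -
  let ?k = "length D"
  have "?k - 1 - j < ?k - 1 - i" "?k - 1 - i < length C" using assms(2-4) by auto
  then have "\<theta> (C ! (?k - 1 - j), C ! (?k - 1 - i))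
      = (D ! (length C - 1 - (?k - 1 - i)), D ! (length C - 1 - (?k - 1 - j)))"
    using assms(1) unfolding maps_decreasingly_def by (meson spec)
  also have "\<dots> = (D ! i, D ! j)" using assms(2-4) by simp
  finally show ?thesis .
qed

lemma finite_max_chains:
  fixes X :: "'a::order set"
  assumes "finite X"
  shows "finite {xs. max_chain X xs}"
proof (rule finite_subset[OF _ finite_lists_length_le[OF assms, of "card X"]])
  show "{xs. max_chain X xs} \<subseteq> {xs. set xs \<subseteq> X \<and> length xs \<le> card X}"
  proof
    fix xs assume "xs \<in> {xs. max_chain X xs}"
    then have sub: "set xs \<subseteq> X" and "distinct xs"
      by (auto simp: max_chain_def is_chain_in_def sorted_wrt_less_distinct)
    then have "length xs = card (set xs)" by (simp add: distinct_card)
    also have "\<dots> \<le> card X" using card_mono[OF assms sub] .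
    finally show "xs \<in> {xs. set xs \<subseteq> X \<and> length xs \<le> card X}" using sub by simp
  qed
qed

lemma chain_pairs_image:
  assumes len: "length D = length C" and maps: "maps_increasingly \<theta> C D \<or> maps_decreasingly \<theta> C D"
  shows "\<theta> ` chain_pairs C = chain_pairs D"
proof -
  let ?k = "length C"
  let ?I = "{(i, j). i < j \<and> j < ?k}"
  have image: "\<theta> ` chain_pairs C = (\<lambda>(i, j). \<theta> (C ! i, C ! j)) ` ?I"
    unfolding chain_pairs_def image_image by (simp add: case_prod_beta)
  have pairs_D: "chain_pairs D = (\<lambda>(i, j). (D ! i, D ! j)) ` ?I"
    unfolding chain_pairs_def len ..
  from maps show ?thesis
  proof
    assume "maps_increasingly \<theta> C D"
    then show ?thesis
      unfolding image pairs_D by (intro image_cong) (auto simp: maps_increasingly_def)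
  next
    assume dec: "maps_decreasingly \<theta> C D"
    define r where "r = (\<lambda>(i, j). (?k - 1 - j, ?k - 1 - i))"
    have r_I: "r ` ?I \<subseteq> ?I" by (auto simp: r_def)
    have "?I \<subseteq> r ` ?I"
    proof
      fix p assume "p \<in> ?I"
      then have "p = r (r p)" "r p \<in> ?I" by (auto simp: r_def)
      then show "p \<in> r ` ?I" by (rule image_eqI)
    qed
    with r_I have "r ` ?I = ?I" by (rule subset_antisym)
    have "\<theta> ` chain_pairs C = ((\<lambda>(i, j). (D ! i, D ! j)) \<circ> r) ` ?I"
      unfolding image using dec by (intro image_cong) (auto simp: maps_decreasingly_def r_def)
    also have "\<dots> = chain_pairs D"
      unfolding image_comp[symmetric] \<open>r ` ?I = ?I\<close> pairs_D ..
    finally show ?thesis .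
  qed
qed

text \<open>Since \<theta> is injective on pairs and a chain with two or more elements is determined by its
  pairs, choosing an image chain for each maximal chain is injective on the finite set of maximal
  chains, hence also surjective.\<close>

lemma max_chain_preimage:
  fixes X :: "'a::order set"
  assumes \<theta>: "\<theta> \<in> M_set X" and fin: "finite X" and D: "max_chain X D" "2 \<le> length D"
  shows "\<exists>C. max_chain X C \<and> length C = length D \<and> (maps_increasingly \<theta> C D \<or> maps_decreasingly \<theta> C D)"
proof -
  define MC where "MC = {xs. max_chain X xs \<and> 2 \<le> length xs}"
  define image_chain where "image_chain C D' \<longleftrightarrow> max_chain X D' \<and> length D' = length C \<and>
    (maps_increasingly \<theta> C D' \<or> maps_decreasingly \<theta> C D')" for C D'
  have inj: "inj_on \<theta> (basisB X)" using \<theta> by (simp add: M_set_def bij_betw_def)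
  have "\<forall>C. \<exists>D'. max_chain X C \<longrightarrow> image_chain C D'"
  proof
    fix C
    show "\<exists>D'. max_chain X C \<longrightarrow> image_chain C D'"
    proof (cases "max_chain X C")
      case True
      with \<theta> have "increasing_on X \<theta> C \<or> decreasing_on X \<theta> C" by (simp add: M_set_def)
      then show ?thesis by (auto simp: increasing_on_iff decreasing_on_iff image_chain_def)
    qed simp
  qed
  then obtain \<phi> where \<phi>: "\<forall>C. max_chain X C \<longrightarrow> image_chain C (\<phi> C)"
    by (rule choice[THEN exE])
  have pairs_\<phi>: "\<theta> ` chain_pairs C = chain_pairs (\<phi> C)" if "C \<in> MC" for C
    using \<phi> that by (intro chain_pairs_image) (auto simp: MC_def image_chain_def)
  have "finite MC" by (rule finite_subset[OF _ finite_max_chains[OF fin]]) (auto simp: MC_def)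
  moreover have "\<phi> ` MC \<subseteq> MC" using \<phi> by (auto simp: MC_def image_chain_def)
  moreover have "inj_on \<phi> MC"
  proof
    fix C1 C2 assume C: "C1 \<in> MC" "C2 \<in> MC" and "\<phi> C1 = \<phi> C2"
    then have "\<theta> ` chain_pairs C1 = \<theta> ` chain_pairs C2" by (simp add: pairs_\<phi>)
    then have "chain_pairs C1 = chain_pairs C2"
      using C inj_on_image_eq_iff[OF inj chain_pairs_subset_basisB chain_pairs_subset_basisB]
      by (simp add: MC_def)
    moreover have "sorted_wrt (<) C1" "sorted_wrt (<) C2" "2 \<le> length C1" "2 \<le> length C2"
      using C by (simp_all add: MC_def max_chain_def)
    ultimately show "C1 = C2" using chain_pairs_inject by blast
  qed
  ultimately have "\<phi> ` MC = MC" by (rule endo_inj_surj)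
  moreover have "D \<in> MC" using D by (simp add: MC_def)
  ultimately obtain C where "C \<in> MC" "D = \<phi> C" by blast
  then show ?thesis using \<phi> by (auto simp: MC_def image_chain_def)
qed

lemma pair_charge_of_image:
  assumes inj: "inj_on \<theta> (basisB X)" and xy: "(x, y) \<in> basisB X" and "z \<in> X"
    and \<theta>xy: "\<theta> (x, y) = (a, b)"
  shows "pair_charge X \<theta> z a b = of_bool (z = x) - of_bool (z = y)"
proof -
  have uniq: "p = (x, y)" if "p \<in> basisB X" "\<theta> p = (a, b)" for p
    using inj_onD[OF inj _ that(1) xy] that(2) \<theta>xy by simp
  have "(\<exists>w\<in>X. z < w \<and> \<theta> (z, w) = (a, b)) \<longleftrightarrow> z = x"
    using uniq[of "(z, _)"] xy \<theta>xy \<open>z \<in> X\<close> by (auto simp: basisB_def)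
  moreover have "(\<exists>w\<in>X. w < z \<and> \<theta> (w, z) = (a, b)) \<longleftrightarrow> z = y"
    using uniq[of "(_, z)"] xy \<theta>xy \<open>z \<in> X\<close> by (auto simp: basisB_def)
  ultimately show ?thesis by (simp add: pair_charge_def)
qed

lemma pair_charge_along_max_chain:
  fixes X :: "'a::order set"
  assumes \<theta>: "\<theta> \<in> M_set X" and "finite X" and D: "max_chain X D" "2 \<le> length D" and z: "z \<in> X"
  obtains g where "\<And>i j. i < j \<Longrightarrow> j < length D \<Longrightarrow> pair_charge X \<theta> z (D ! i) (D ! j) = g i - g j"
proof -
  obtain C where C: "max_chain X C" "length C = length D"
      and maps: "maps_increasingly \<theta> C D \<or> maps_decreasingly \<theta> C D"
    using max_chain_preimage[OF \<theta> \<open>finite X\<close> D] by blast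
  have inj: "inj_on \<theta> (basisB X)" using \<theta> by (simp add: M_set_def bij_betw_def)
  have inB: "(C ! i, C ! j) \<in> basisB X" if "i < j" "j < length C" for i j
    using chain_pairs_subset_basisB[OF C(1)] chain_pairsI[OF that] by blast
  let ?k = "length D"
  from maps show thesis
  proof
    assume inc: "maps_increasingly \<theta> C D"
    show thesis
    proof (rule that[of "\<lambda>i. of_bool (z = C ! i)"])
      fix i j assume ij: "i < j" "j < ?k"
      then have "j < length C" "\<theta> (C ! i, C ! j) = (D ! i, D ! j)"
        using inc C(2) by (simp_all add: maps_increasingly_def)
      from pair_charge_of_image[OF inj inB[OF ij(1) this(1)] z this(2)]
      show "pair_charge X \<theta> z (D ! i) (D ! j) = of_bool (z = C ! i) - of_bool (z = C ! j)" by simp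
    qed
  next
    assume dec: "maps_decreasingly \<theta> C D"
    show thesis
    proof (rule that[of "\<lambda>i. - of_bool (z = C ! (?k - 1 - i))"])
      fix i j assume ij: "i < j" "j < ?k"
      have "?k - 1 - j < ?k - 1 - i" "?k - 1 - i < length C" using ij C(2) by auto
      from pair_charge_of_image[OF inj inB[OF this] z maps_decreasingly_reindex[OF dec C(2) ij]]
      show "pair_charge X \<theta> z (D ! i) (D ! j)
          = - of_bool (z = C ! (?k - 1 - i)) - - of_bool (z = C ! (?k - 1 - j))" by simp
    qed
  qed
qed

lemma pair_refines_to_walk:
  fixes X :: "'a::order set"
  assumes \<theta>: "\<theta> \<in> M_set X" and "finite X" and ab: "a \<in> X" "b \<in> X" "a < b" and z: "z \<in> X"
  shows "\<exists>ws. walk X ws \<and> hd ws = a \<and> last ws = b \<and> charge X \<theta> z ws = pair_charge X \<theta> z a b"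
proof -
  have "is_chain_in X {a, b}" using ab by (auto simp: is_chain_in_def)
  then obtain D where D: "max_chain X D" "a \<in> set D" "b \<in> set D"
    using chain_extends_to_max_chain[OF \<open>finite X\<close>] by blast
  have sorted: "sorted_wrt (<) D" using D(1) by (simp add: max_chain_def)
  from D(2) obtain p where p: "p < length D" "a = D ! p" by (auto simp: in_set_conv_nth)
  from D(3) obtain q where q: "q < length D" "b = D ! q" by (auto simp: in_set_conv_nth)
  have "p < q" using sorted_wrt_less_nth_less_iff[OF sorted p(1) q(1)] \<open>a < b\<close> p q by simp
  then have "2 \<le> length D" using q by linarith
  obtain g where g: "\<And>i j. i < j \<Longrightarrow> j < length D \<Longrightarrow> pair_charge X \<theta> z (D ! i) (D ! j) = g i - g j"
    using pair_charge_along_max_chain[OF \<theta> \<open>finite X\<close> D(1) \<open>2 \<le> length D\<close> z] by blast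
  define ws where "ws = drop p (take (Suc q) D)"
  have len: "length ws = Suc q - p" and nth: "\<And>i. i < length ws \<Longrightarrow> ws ! i = D ! (p + i)"
    using q(1) \<open>p < q\<close> by (simp_all add: ws_def)
  then have "ws \<noteq> []" using \<open>p < q\<close> by auto
  have "walk X D" using q(1) by (intro max_chain_walk[OF D(1)]) auto
  then have "walk X ws"
    unfolding ws_def by (rule walk_drop_take) (use \<open>p < q\<close> q(1) in simp_all)
  moreover have "hd ws = a" "last ws = b"
    using \<open>ws \<noteq> []\<close> len nth p q \<open>p < q\<close> by (simp_all add: hd_conv_nth last_conv_nth)
  moreover have "charge X \<theta> z ws = pair_charge X \<theta> z a b"
  proof -
    have step: "step_charge X \<theta> z (ws ! i) (ws ! Suc i) = g (p + i) - g (p + Suc i)"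
      if "Suc i < length ws" for i
    proof -
      have "p + Suc i < length D" using that len q(1) by linarith
      then have "D ! (p + i) < D ! (p + Suc i)" using sorted_wrt_nth_less[OF sorted] by simp
      then show ?thesis using that nth g \<open>p + Suc i < length D\<close> by (simp add: step_charge_def)
    qed
    have "charge X \<theta> z ws = g (p + 0) - g (p + (length ws - 1))"
      by (rule charge_telescope[where h = "\<lambda>i. g (p + i)"]) (use \<open>ws \<noteq> []\<close> step in auto)
    also have "\<dots> = pair_charge X \<theta> z a b" using len g p q \<open>p < q\<close> by simp
    finally show ?thesis .
  qed
  ultimately show ?thesis by blast
qed

lemma step_refines_to_walk:
  fixes X :: "'a::order set"
  assumes \<theta>: "\<theta> \<in> M_set X" and "finite X" and "a \<in> X" "b \<in> X" and "a < b \<or> b < a" and "z \<in> X"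
  shows "\<exists>ws. walk X ws \<and> hd ws = a \<and> last ws = b \<and> charge X \<theta> z ws = step_charge X \<theta> z a b"
  using assms(5)
proof
  assume "a < b"
  then show ?thesis
    using pair_refines_to_walk[OF assms(1-4) \<open>a < b\<close> assms(6)] by (simp add: step_charge_def)
next
  assume "b < a"
  then have "\<not> a < b" by (rule less_not_sym)
  obtain ws where ws: "walk X ws" "hd ws = b" "last ws = a" "charge X \<theta> z ws = pair_charge X \<theta> z b a"
    using pair_refines_to_walk[OF assms(1,2,4,3) \<open>b < a\<close> assms(6)] by blast
  have "walk X (rev ws)" using walk_rev[OF ws(1)] .
  moreover have "hd (rev ws) = a" "last (rev ws) = b"
    using ws walk_nonempty[OF ws(1)] by (simp_all add: hd_rev last_rev)
  moreover have "charge X \<theta> z (rev ws) = step_charge X \<theta> z a b"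
    using ws(4) \<open>b < a\<close> \<open>\<not> a < b\<close> by (simp add: charge_rev step_charge_def)
  ultimately show ?thesis by blast
qed

lemma semiwalk_refines_to_walk:
  fixes X :: "'a::order set"
  assumes \<theta>: "\<theta> \<in> M_set X" and "finite X" and "z \<in> X"
  shows "semiwalk X us \<Longrightarrow>
    \<exists>ws. walk X ws \<and> hd ws = hd us \<and> last ws = last us \<and> charge X \<theta> z ws = charge X \<theta> z us"
proof (induction us rule: induct_list012)
  case (2 a)
  then show ?case by (intro exI[of _ "[a]"]) simp
next
  case (3 a b us)
  then have a: "a \<in> X" "a < b \<or> b < a" and bus: "semiwalk X (b # us)"
    by (simp_all add: semiwalk_Cons_Cons)
  then have "b \<in> X" by (simp add: semiwalk_def)
  obtain ws where ws: "walk X ws" "hd ws = a" "last ws = b" "charge X \<theta> z ws = step_charge X \<theta> z a b"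
    using step_refines_to_walk[OF \<theta> \<open>finite X\<close> a(1) \<open>b \<in> X\<close> a(2) \<open>z \<in> X\<close>] by blast
  obtain ws' where ws': "walk X ws'" "hd ws' = b" "last ws' = last (b # us)"
      "charge X \<theta> z ws' = charge X \<theta> z (b # us)"
    using "3.IH"(2)[OF bus] unfolding list.sel(1) by blast
  have ne: "ws \<noteq> []" "ws' \<noteq> []" using ws(1) ws'(1) by (simp_all add: walk_nonempty)
  have join: "last ws = hd ws'" using ws ws' by simp
  have "walk X (ws @ tl ws')" using walk_append[OF ws(1) ws'(1) join] .
  moreover have "hd (ws @ tl ws') = hd (a # b # us)" "last (ws @ tl ws') = last (a # b # us)"
    using ne ws ws' last_append_tl[OF ne(2) join ne(1)] by simp_all
  moreover have "charge X \<theta> z (ws @ tl ws') = charge X \<theta> z (a # b # us)"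
    using charge_append[OF ne join] ws(4) ws'(4) by simp
  ultimately show ?case by blast
qed (simp add: semiwalk_def)

lemma admissible_balanced_closed_semiwalk:
  assumes "admissible X \<theta>" and "\<theta> \<in> M_set X" and "finite X"
    and "semiwalk X us" and "closed_sw us" and "z \<in> X"
  shows "balanced_at X \<theta> us z"
proof -
  obtain ws where ws: "walk X ws" "hd ws = hd us" "last ws = last us"
      "charge X \<theta> z ws = charge X \<theta> z us"
    using semiwalk_refines_to_walk[OF assms(2,3,6,4)] by blast
  with assms(5) have "closed_sw ws" by (simp add: closed_sw_def)
  with assms(1,6) ws(1) have "balanced_at X \<theta> ws z" by (simp add: admissible_def)
  with ws(4) show ?thesis by (simp add: balanced_at_iff_charge_eq_0)
qed

theorem corollary3p2:
  fixes X :: "'a::order set" and \<theta> :: "'a \<times> 'a \<Rightarrow> 'a \<times> 'a"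
  assumes "finite X" and "connected_poset X" and "\<theta> \<in> M_set X"
  shows "\<theta> \<in> AM_set X \<longleftrightarrow>
    (\<forall>us. semiwalk X us \<and> closed_sw us \<and> length us \<ge> 3 \<longrightarrow>
       (\<forall>z\<in>X. balanced_at X \<theta> us z))"
proof
  assume "\<theta> \<in> AM_set X"
  then have "admissible X \<theta>" by (simp add: AM_set_def)
  then show "\<forall>us. semiwalk X us \<and> closed_sw us \<and> length us \<ge> 3 \<longrightarrow> (\<forall>z\<in>X. balanced_at X \<theta> us z)"
    using admissible_balanced_closed_semiwalk assms(1,3) by blast
next
  assume long: "\<forall>us. semiwalk X us \<and> closed_sw us \<and> length us \<ge> 3 \<longrightarrow> (\<forall>z\<in>X. balanced_at X \<theta> us z)"
  have "balanced_at X \<theta> us z" if "walk X us" "closed_sw us" "z \<in> X" for us z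
  proof -
    have "semiwalk X us" using that(1) by (simp add: walk_def)
    then have "length us = 1 \<or> 3 \<le> length us" using that(2) by (rule closed_semiwalk_length)
    then show ?thesis
    proof
      assume "length us = 1"
      then show ?thesis by (auto simp: length_Suc_conv balanced_at_iff_charge_eq_0)
    qed (use long \<open>semiwalk X us\<close> that in blast)
  qed
  with assms(3) show "\<theta> \<in> AM_set X" by (simp add: AM_set_def admissible_def)
qed

end
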